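(* Assume $r_0>-\infty$ and $\mathbb E[(\min\{t_1^+,\dots,t_{2d}^+\})^d]<\infty$. For $\diamond\in\{\text{none},o\}$ and $|\xi|_1=1$, the radial limit $g^\diamond(\xi)=\lim_{t\nearrow1}g^\diamond(t\xi)$ extends both shape functions to all of $\mathcal U$. The resulting functions $g:\mathcal U\to[r_0,\infty]$ and $g^o:\mathcal U\to[r_0\wedge0,\infty]$ are both convex and lower semicontinuous.
   Context: Let $d\ge2$. The edge weights $\{t(e)\}$ on the undirected nearest-neighbor edges of $\mathbb Z^d$ are i.i.d. real, and $t_i$ are i.i.d. copies with $t_i^+=t_i\vee 0$. Set $r_0=\operatorname{ess\,inf}t(e)$, $\mathcal U=\{\xi\in\mathbb R^d:|\xi|_1\le1\}$, and $\operatorname{int}\mathcal U=\{|\xi|_1<1\}$. For paths $(x_0,\dots,x_n)$ with steps in $\mathcal R=\{\pm e_i\}$ (respectively in $\mathcal R^o=\mathcal R\cup\{0\}$, where zero steps have weight $0$), let $G_{0,(n),x}$ (respectively $G^o_{0,(n),x}$) be the minimal passage time over such $n$-step paths from $0$ to $x$. Let $\mathcal D_n$ (respectively $\mathcal D^o_n$) be the set of points reachable by such $n$-step paths. Under the hypotheses, there are deterministic continuous convex functions $g,g^o$ on $\operatorname{int}\mathcal U$ (the restricted path-length shape functions, written $g^\diamond$ with $g^{\text{none}}=g$) such that almost surely, for all $\xi$, all $\alpha>|\xi|_1$ and all $k_n\to\infty$ with $k_n/n\to\alpha$, $x_n\in\mathcal D_{k_n}$, $y_n\in\mathcal D^o_{k_n}$,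 $x_n/n\to\xi$, $y_n/n\to\xi$: $$n^{-1}G_{0,(k_n),x_n}\to\alpha g(\xi/\alpha)\quad\text{and}\quad n^{-1}G^o_{0,(k_n),y_n}\to\alpha g^o(\xi/\alpha).$$ *)

theory Defs
  imports "HOL-Probability.Probability"
begin

text \<open>Lattice points of Z^d are vectors of type int^'n, d = CARD('n).
  The undirected nearest-neighbour edge {x, x + e_i} is indexed by the pair (x, i).\<close>

type_synonym 'n edge = "(int ^ 'n) \<times> 'n"

definition unitv :: "'n::finite \<Rightarrow> int ^ 'n" where
  "unitv i = (\<chi> j. if j = i then 1 else 0)"

text \<open>A step is an optional signed unit vector: Some (i, True) = +e_i, Some (i, False) = -e_i,
  None = the zero step.  R = range Some, R^o = UNIV.\<close>

type_synonym 'n step = "('n \<times> bool) option"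

definition stepR :: "'n step set" where "stepR = range Some"
definition stepRo :: "'n step set" where "stepRo = UNIV"

fun stepv :: "'n::finite step \<Rightarrow> int ^ 'n" where
  "stepv None = 0"
| "stepv (Some (i, b)) = (if b then unitv i else - unitv i)"

fun stepw :: "('n edge \<Rightarrow> real) \<Rightarrow> int ^ 'n \<Rightarrow> 'n::finite step \<Rightarrow> real" where
  "stepw t x None = 0"
| "stepw t x (Some (i, b)) = (if b then t (x, i) else t (x - unitv i, i))"

fun endpt :: "int ^ 'n \<Rightarrow> 'n::finite step list \<Rightarrow> int ^ 'n" where
  "endpt x [] = x"
| "endpt x (s # ss) = endpt (x + stepv s) ss"

fun pathw :: "('n edge \<Rightarrow> real) \<Rightarrow> int ^ 'n \<Rightarrow> 'n::finite step list \<Rightarrow> real" where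
  "pathw t x [] = 0"
| "pathw t x (s # ss) = stepw t x s + pathw t (x + stepv s) ss"

definition paths :: "'n::finite step set \<Rightarrow> nat \<Rightarrow> int ^ 'n \<Rightarrow> 'n step list set" where
  "paths S n x = {ss. length ss = n \<and> set ss \<subseteq> S \<and> endpt 0 ss = x}"

definition reach :: "'n::finite step set \<Rightarrow> nat \<Rightarrow> (int ^ 'n) set" where
  "reach S n = {x. paths S n x \<noteq> {}}"

definition Gpt :: "'n::finite step set \<Rightarrow> ('n edge \<Rightarrow> real) \<Rightarrow> nat \<Rightarrow> int ^ 'n \<Rightarrow> real" where
  "Gpt S t n x = Min (pathw t 0 ` paths S n x)"

definition l1norm :: "real ^ 'n::finite \<Rightarrow> real" where
  "l1norm \<xi> = (\<Sum>i\<in>UNIV. \<bar>\<xi> $ i\<bar>)"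

definition toR :: "int ^ 'n::finite \<Rightarrow> real ^ 'n" where
  "toR x = (\<chi> i. real_of_int (x $ i))"

definition Uset :: "(real ^ 'n::finite) set" where
  "Uset = {\<xi>. l1norm \<xi> \<le> 1}"

definition intU :: "(real ^ 'n::finite) set" where
  "intU = {\<xi>. l1norm \<xi> < 1}"

text \<open>The 2d edges incident to the origin (the i.i.d. copies t_1,...,t_{2d}).\<close>
definition edges0 :: "'n::finite edge set" where
  "edges0 = (\<lambda>i. (0, i)) ` UNIV \<union> (\<lambda>i. (- unitv i, i)) ` UNIV"

definition is_shape_fn ::
  "'a measure \<Rightarrow> ('n::finite edge \<Rightarrow> 'a \<Rightarrow> real) \<Rightarrow> 'n step set \<Rightarrow> (real ^ 'n \<Rightarrow> real) \<Rightarrow> bool" where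
  "is_shape_fn M T S g \<longleftrightarrow>
     (AE \<omega> in M. \<forall>\<xi> \<alpha> (k::nat \<Rightarrow> nat) (x::nat \<Rightarrow> int ^ 'n).
        \<alpha> > l1norm \<xi> \<and> filterlim k at_top sequentially
        \<and> (\<lambda>n. real (k n) / real n) \<longlonglongrightarrow> \<alpha>
        \<and> (\<forall>n. x n \<in> reach S (k n))
        \<and> (\<lambda>n. (1 / real n) *\<^sub>R toR (x n)) \<longlonglongrightarrow> \<xi>
        \<longrightarrow> (\<lambda>n. Gpt S (\<lambda>e. T e \<omega>) (k n) (x n) / real n) \<longlonglongrightarrow> \<alpha> * g ((1 / \<alpha>) *\<^sub>R \<xi>))"

definition ext_shape :: "(real ^ 'n::finite \<Rightarrow> real) \<Rightarrow> real ^ 'n \<Rightarrow> ereal" where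
  "ext_shape g \<xi> = (if l1norm \<xi> < 1 then ereal (g \<xi>)
                    else Lim (at_left 1) (\<lambda>t. ereal (g (t *\<^sub>R \<xi>))))"

definition convex_ereal_on :: "(real ^ 'n::finite) set \<Rightarrow> (real ^ 'n \<Rightarrow> ereal) \<Rightarrow> bool" where
  "convex_ereal_on A f \<longleftrightarrow> (\<forall>x\<in>A. \<forall>y\<in>A. \<forall>a::real. 0 < a \<and> a < 1 \<longrightarrow>
      f ((1 - a) *\<^sub>R x + a *\<^sub>R y) \<le> ereal (1 - a) * f x + ereal a * f y)"

definition lsc_on :: "(real ^ 'n::finite) set \<Rightarrow> (real ^ 'n \<Rightarrow> ereal) \<Rightarrow> bool" where
  "lsc_on A f \<longleftrightarrow> (\<forall>x\<in>A. \<forall>c. c < f x \<longrightarrow> (\<forall>\<^sub>F y in at x within A. c < f y))"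

end

theory Submission
  imports Defs
begin

(* Along a ray t \<mapsto> g (t \<xi>) the difference quotient (g (t \<xi>) - g 0) / t of a convex
   function is nondecreasing in t, so the radial limit at t = 1 exists and is > -\<infinity>.
   Convexity of the extension follows by passing to the limit along rays.  For lower
   semicontinuity at \<xi>, pick s < 1 with g (s \<xi>) > c; writing s \<xi> as a convex combination
   of a point z near \<xi> and a point near 0, where g is bounded, gives a lower bound for g (z)
   uniformly near \<xi>, which again passes to radial limits.
   The lower bounds come from the shape limit: every path with n steps has weight at least
   n r0 (resp. n min r0 0 when zero steps are allowed), and 2 \<xi> is approximated by doubled
   lattice points, which are reachable in exactly 2n steps. *)

section \<open>Convex functions on the open unit ball of the l1 norm\<close>

lemma l1norm_scaleR: "l1norm (c *\<^sub>R x) = \<bar>c\<bar> * l1norm x"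
  by (simp add: l1norm_def abs_mult sum_distrib_left)

lemma l1norm_triangle: "l1norm (x + y) \<le> l1norm x + l1norm y"
  unfolding l1norm_def sum.distrib[symmetric] by (intro sum_mono) (simp add: abs_triangle_ineq)

lemma open_intU: "open intU"
  unfolding intU_def l1norm_def by (intro open_Collect_less continuous_intros)

lemma zero_in_intU: "0 \<in> intU"
  by (simp add: intU_def l1norm_def)

lemma scaleR_in_intU: "\<xi> \<in> Uset \<Longrightarrow> 0 \<le> t \<Longrightarrow> t < 1 \<Longrightarrow> t *\<^sub>R \<xi> \<in> intU"
  using mult_left_le[of "l1norm \<xi>" t] by (simp add: Uset_def intU_def l1norm_scaleR)

lemma convex_Uset: "convex Uset"
proof (rule convexI)
  fix x y :: "real ^ 'n" and a b :: real
  assume "x \<in> Uset" "y \<in> Uset" "0 \<le> a" "0 \<le> b" "a + b = 1"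
  moreover have "l1norm (a *\<^sub>R x + b *\<^sub>R y) \<le> a * l1norm x + b * l1norm y"
    using l1norm_triangle[of "a *\<^sub>R x" "b *\<^sub>R y"] \<open>0 \<le> a\<close> \<open>0 \<le> b\<close>
    by (simp add: l1norm_scaleR)
  ultimately show "a *\<^sub>R x + b *\<^sub>R y \<in> Uset"
    unfolding Uset_def using mult_left_le[of "l1norm x" a] mult_left_le[of "l1norm y" b] by auto
qed

lemma convex_on_intU_slope_mono:
  assumes cvx: "convex_on intU g" and \<xi>: "\<xi> \<in> Uset" and st: "0 < s" "s < t" "t < 1"
  shows "(g (s *\<^sub>R \<xi>) - g 0) / s \<le> (g (t *\<^sub>R \<xi>) - g 0) / t"
proof -
  have "s *\<^sub>R \<xi> = (1 - s / t) *\<^sub>R 0 + (s / t) *\<^sub>R (t *\<^sub>R \<xi>)"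
    using st by simp
  then have "g (s *\<^sub>R \<xi>) \<le> (1 - s / t) * g 0 + (s / t) * g (t *\<^sub>R \<xi>)"
    using st \<xi> by (metis convex_onD[OF cvx] zero_in_intU scaleR_in_intU
        divide_nonneg_pos divide_le_eq_1_pos less_eq_real_def order.strict_trans)
  then have "g (s *\<^sub>R \<xi>) - g 0 \<le> (s / t) * (g (t *\<^sub>R \<xi>) - g 0)"
    by (simp add: algebra_simps)
  then show ?thesis
    using st by (simp add: divide_simps mult.commute)
qed

lemma tendsto_at_left_SUP_mono_on:
  fixes f :: "real \<Rightarrow> real"
  assumes "a < b" and mono: "mono_on {a<..<b} f"
  shows "((\<lambda>t. ereal (f t)) \<longlongrightarrow> (SUP t\<in>{a<..<b}. ereal (f t))) (at_left b)"
proof (rule increasing_tendsto)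
  have "\<forall>\<^sub>F t in at_left b. t \<in> {a<..<b}"
    using \<open>a < b\<close> by (intro eventually_at_left_real) simp
  then show "\<forall>\<^sub>F t in at_left b. ereal (f t) \<le> (SUP t\<in>{a<..<b}. ereal (f t))"
    by eventually_elim (rule SUP_upper)
next
  fix c assume "c < (SUP t\<in>{a<..<b}. ereal (f t))"
  then obtain s where s: "s \<in> {a<..<b}" "c < ereal (f s)"
    unfolding less_SUP_iff by blast
  then have "\<forall>\<^sub>F t in at_left b. t \<in> {s<..<b}"
    by (intro eventually_at_left_real) simp
  then show "\<forall>\<^sub>F t in at_left b. c < ereal (f t)"
  proof eventually_elim
    case (elim t)
    then have "f s \<le> f t"
      using s by (intro mono_onD[OF mono]) auto
    then show ?case
      using s(2) by (simp add: less_le_trans)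
  qed
qed

lemma convex_on_intU_radial_limit:
  assumes cvx: "convex_on intU g" and \<xi>: "\<xi> \<in> Uset"
  obtains L where "L \<noteq> - \<infinity>" "((\<lambda>t. ereal (g (t *\<^sub>R \<xi>))) \<longlongrightarrow> L) (at_left 1)"
proof -
  define h where "h t = (g (t *\<^sub>R \<xi>) - g 0) / t" for t
  define L where "L = (SUP t\<in>{0<..<1::real}. ereal (h t))"
  have "mono_on {0<..<1} h"
  proof (rule mono_onI)
    fix s t :: real assume "s \<in> {0<..<1}" "t \<in> {0<..<1}" "s \<le> t"
    then show "h s \<le> h t"
      unfolding h_def using convex_on_intU_slope_mono[OF cvx \<xi>, of s t] by (cases "s = t") auto
  qed
  then have "((\<lambda>t. ereal (h t)) \<longlongrightarrow> L) (at_left 1)"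
    unfolding L_def by (intro tendsto_at_left_SUP_mono_on) auto
  then have "((\<lambda>t. ereal (g 0) + ereal t * ereal (h t)) \<longlongrightarrow> ereal (g 0) + ereal 1 * L) (at_left 1)"
    by (intro tendsto_add_ereal_general2 tendsto_mult_ereal tendsto_const)
      (auto intro!: tendsto_intros)
  moreover have "\<forall>\<^sub>F t in at_left 1. ereal (g 0) + ereal t * ereal (h t) = ereal (g (t *\<^sub>R \<xi>))"
    using eventually_at_left_real[of 0 1, simplified] by eventually_elim (auto simp: h_def)
  ultimately have "((\<lambda>t. ereal (g (t *\<^sub>R \<xi>))) \<longlongrightarrow> ereal (g 0) + L) (at_left 1)"
    using Lim_transform_eventually by fastforce
  moreover have "ereal (h (1/2)) \<le> L"
    unfolding L_def by (rule SUP_upper) auto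
  then have "ereal (g 0) + L \<noteq> - \<infinity>"
    by auto
  ultimately show thesis
    using that by blast
qed

lemma tendsto_ext_shape:
  assumes cvx: "convex_on intU g" and \<xi>: "\<xi> \<in> Uset"
  shows "((\<lambda>t. ereal (g (t *\<^sub>R \<xi>))) \<longlongrightarrow> ext_shape g \<xi>) (at_left 1)"
proof (cases "l1norm \<xi> < 1")
  case True
  then have "\<xi> \<in> intU"
    by (simp add: intU_def)
  then have "isCont g \<xi>"
    using convex_on_continuous[OF open_intU cvx] continuous_on_eq_continuous_at[OF open_intU] by blast
  moreover have "((\<lambda>t. t *\<^sub>R \<xi>) \<longlongrightarrow> 1 *\<^sub>R \<xi>) (at_left (1::real))"
    by (intro tendsto_intros)
  ultimately have "((\<lambda>t. g (t *\<^sub>R \<xi>)) \<longlongrightarrow> g \<xi>) (at_left 1)"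
    using isCont_tendsto_compose by fastforce
  then show ?thesis
    using True by (simp add: ext_shape_def)
next
  case False
  obtain L where "((\<lambda>t. ereal (g (t *\<^sub>R \<xi>))) \<longlongrightarrow> L) (at_left 1)"
    using convex_on_intU_radial_limit[OF cvx \<xi>] by blast
  then show ?thesis
    using False by (simp add: ext_shape_def tendsto_Lim[OF trivial_limit_at_left_real])
qed

lemma ext_shape_not_MInfty:
  assumes cvx: "convex_on intU g" and \<xi>: "\<xi> \<in> Uset"
  shows "ext_shape g \<xi> \<noteq> - \<infinity>"
proof -
  obtain L where "L \<noteq> - \<infinity>" "((\<lambda>t. ereal (g (t *\<^sub>R \<xi>))) \<longlongrightarrow> L) (at_left 1)"
    using convex_on_intU_radial_limit[OF cvx \<xi>] by blast
  with tendsto_ext_shape[OF cvx \<xi>] show ?thesis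
    using tendsto_unique[OF trivial_limit_at_left_real] by metis
qed

lemma ext_shape_ge:
  assumes cvx: "convex_on intU g" and \<xi>: "\<xi> \<in> Uset" and ge: "\<And>z. z \<in> intU \<Longrightarrow> c \<le> g z"
  shows "ereal c \<le> ext_shape g \<xi>"
proof (rule tendsto_lowerbound[OF tendsto_ext_shape[OF cvx \<xi>] _ trivial_limit_at_left_real])
  show "\<forall>\<^sub>F t in at_left 1. ereal c \<le> ereal (g (t *\<^sub>R \<xi>))"
    using eventually_at_left_real[of 0 1, simplified]
    by eventually_elim (auto intro!: ge scaleR_in_intU[OF \<xi>])
qed

lemma convex_ereal_on_ext_shape:
  fixes g :: "real ^ 'n::finite \<Rightarrow> real"
  assumes cvx: "convex_on intU g"
  shows "convex_ereal_on Uset (ext_shape g)"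
  unfolding convex_ereal_on_def
proof (intro ballI allI impI)
  fix x y :: "real ^ 'n" and a :: real
  assume x: "x \<in> Uset" and y: "y \<in> Uset" and a: "0 < a \<and> a < 1"
  define z where "z = (1 - a) *\<^sub>R x + a *\<^sub>R y"
  have z: "z \<in> Uset"
    unfolding z_def using convexD[OF convex_Uset x y, of "1 - a" a] a by simp
  have "ereal (1 - a) * ext_shape g x \<noteq> - \<infinity>" "ereal a * ext_shape g y \<noteq> - \<infinity>"
    using ext_shape_not_MInfty[OF cvx x] ext_shape_not_MInfty[OF cvx y] a
    by (auto simp: ereal_mult_eq_MInfty)
  then have lim: "((\<lambda>t. ereal (1 - a) * ereal (g (t *\<^sub>R x)) + ereal a * ereal (g (t *\<^sub>R y)))
      \<longlongrightarrow> ereal (1 - a) * ext_shape g x + ereal a * ext_shape g y) (at_left 1)"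
    by (intro tendsto_add_ereal_general tendsto_cmult_ereal tendsto_ext_shape[OF cvx] x y) auto
  show "ext_shape g z \<le> ereal (1 - a) * ext_shape g x + ereal a * ext_shape g y"
  proof (rule tendsto_le[OF trivial_limit_at_left_real lim tendsto_ext_shape[OF cvx z]])
    show "\<forall>\<^sub>F t in at_left 1. ereal (g (t *\<^sub>R z)) \<le>
        ereal (1 - a) * ereal (g (t *\<^sub>R x)) + ereal a * ereal (g (t *\<^sub>R y))"
      using eventually_at_left_real[of 0 1, simplified]
    proof eventually_elim
      case (elim t)
      then have "g ((1 - a) *\<^sub>R (t *\<^sub>R x) + a *\<^sub>R (t *\<^sub>R y)) \<le> (1 - a) * g (t *\<^sub>R x) + a * g (t *\<^sub>R y)"
        using a x y by (intro convex_onD[OF cvx]) (auto intro: scaleR_in_intU)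
      then show "ereal (g (t *\<^sub>R z)) \<le> ereal (1 - a) * ereal (g (t *\<^sub>R x)) + ereal a * ereal (g (t *\<^sub>R y))"
        by (simp add: z_def algebra_simps)
    qed
  qed
qed

lemma convex_on_intU_bounded_near_zero:
  assumes cvx: "convex_on intU g"
  obtains \<rho> K where "0 < \<rho>" "\<And>w. norm w < \<rho> \<Longrightarrow> w \<in> intU \<and> g w \<le> K"
proof -
  have "isCont g 0"
    using convex_on_continuous[OF open_intU cvx] zero_in_intU
      continuous_on_eq_continuous_at[OF open_intU] by blast
  then have "\<forall>\<^sub>F w in nhds 0. g w < g 0 + 1"
    by (intro order_tendstoD) (auto simp: isCont_def tendsto_at_iff_tendsto_nhds)
  moreover have "\<forall>\<^sub>F w in nhds 0. w \<in> intU"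
    by (rule eventually_nhds_in_open[OF open_intU zero_in_intU])
  ultimately have "\<forall>\<^sub>F w in nhds 0. w \<in> intU \<and> g w \<le> g 0 + 1"
    by eventually_elim auto
  then obtain \<rho> where "0 < \<rho>" "\<And>w. norm w < \<rho> \<Longrightarrow> w \<in> intU \<and> g w \<le> g 0 + 1"
    unfolding eventually_nhds_metric dist_norm by auto
  then show thesis
    by (rule that)
qed

lemma convex_on_intU_shrink_le:
  assumes cvx: "convex_on intU g"
    and \<rho>: "0 < \<rho>" "\<And>w. norm w < \<rho> \<Longrightarrow> w \<in> intU \<and> g w \<le> K"
    and s: "0 < s" "s < 1" and z: "z \<in> intU" "dist z \<xi> < \<rho> * (1 - s)"
  shows "g (s *\<^sub>R \<xi>) \<le> s * g z + (1 - s) * K"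
proof -
  define w where "w = (s / (1 - s)) *\<^sub>R (\<xi> - z)"
  have "norm w = s / (1 - s) * dist z \<xi>"
    using s by (simp add: w_def dist_norm norm_minus_commute)
  also have "\<dots> < s / (1 - s) * (\<rho> * (1 - s))"
    using s z by (intro mult_strict_left_mono) auto
  also have "\<dots> = s * \<rho>"
    using s by simp
  also have "\<dots> < \<rho>"
    using s \<rho> by simp
  finally have w: "w \<in> intU" "g w \<le> K"
    using \<rho> by auto
  have "(1 - s) *\<^sub>R w = s *\<^sub>R (\<xi> - z)"
    using s by (simp add: w_def)
  then have "s *\<^sub>R \<xi> = (1 - s) *\<^sub>R w + s *\<^sub>R z"
    by (simp add: algebra_simps)
  then have "g (s *\<^sub>R \<xi>) \<le> (1 - s) * g w + s * g z"
    using s w z by (simp add: convex_onD[OF cvx])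
  also have "\<dots> \<le> (1 - s) * K + s * g z"
    using s w by simp
  finally show ?thesis
    by simp
qed

lemma ext_shape_locally_ge:
  assumes cvx: "convex_on intU g" and \<xi>: "\<xi> \<in> Uset" and c: "ereal c < ext_shape g \<xi>"
  obtains \<delta> where "0 < \<delta>" "\<And>z. z \<in> intU \<Longrightarrow> dist z \<xi> < \<delta> \<Longrightarrow> c \<le> g z"
proof -
  obtain \<rho> K where \<rho>: "0 < \<rho>" "\<And>w. norm w < \<rho> \<Longrightarrow> w \<in> intU \<and> g w \<le> K"
    using convex_on_intU_bounded_near_zero[OF cvx] by blast
  obtain c' where c': "c < c'" "ereal c' < ext_shape g \<xi>"
    using ereal_dense2[OF c] by auto
  have "\<forall>\<^sub>F s in at_left 1. ereal c' < ereal (g (s *\<^sub>R \<xi>))"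
    using order_tendstoD(1)[OF tendsto_ext_shape[OF cvx \<xi>] c'(2)] .
  moreover have "((\<lambda>s. (c' - (1 - s) * K) / s) \<longlongrightarrow> (c' - (1 - 1) * K) / 1) (at_left (1::real))"
    by (intro tendsto_intros) auto
  then have "\<forall>\<^sub>F s in at_left 1. c < (c' - (1 - s) * K) / s"
    using c'(1) by (intro order_tendstoD(1)) auto
  ultimately have "\<forall>\<^sub>F s in at_left 1. 0 < s \<and> s < 1 \<and> c' < g (s *\<^sub>R \<xi>) \<and> c < (c' - (1 - s) * K) / s"
    using eventually_at_left_real[of 0 1, simplified] by eventually_elim auto
  then obtain s where s: "0 < s" "s < 1" "c' < g (s *\<^sub>R \<xi>)" "c < (c' - (1 - s) * K) / s"
    using eventually_happens'[OF trivial_limit_at_left_real] by blast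
  show thesis
  proof
    show "0 < \<rho> * (1 - s)"
      using \<rho> s by simp
  next
    fix z assume "z \<in> intU" "dist z \<xi> < \<rho> * (1 - s)"
    then have "c' < s * g z + (1 - s) * K"
      using convex_on_intU_shrink_le[OF cvx \<rho> s(1,2)] s(3) by fastforce
    moreover have "s * c < c' - (1 - s) * K"
      using s by (simp add: field_simps)
    ultimately have "s * c < s * g z"
      by linarith
    then show "c \<le> g z"
      using s by simp
  qed
qed

lemma lsc_on_ext_shape:
  assumes cvx: "convex_on intU g"
  shows "lsc_on Uset (ext_shape g)"
  unfolding lsc_on_def
proof (intro ballI allI impI)
  fix \<xi> c assume \<xi>: "\<xi> \<in> Uset" and c: "c < ext_shape g \<xi>"
  show "\<forall>\<^sub>F y in at \<xi> within Uset. c < ext_shape g y"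
  proof (cases c)
    case MInf
    then show ?thesis
      using ext_shape_not_MInfty[OF cvx] by (auto simp: eventually_at_filter)
  next
    case PInf
    then show ?thesis
      using c by simp
  next
    case real
    obtain c1 where c1: "c < ereal c1" "ereal c1 < ext_shape g \<xi>"
      using ereal_dense2[OF c] by blast
    obtain \<delta> where \<delta>: "0 < \<delta>" "\<And>z. z \<in> intU \<Longrightarrow> dist z \<xi> < \<delta> \<Longrightarrow> c1 \<le> g z"
      using ext_shape_locally_ge[OF cvx \<xi> c1(2)] by blast
    have "ereal c1 \<le> ext_shape g y" if y: "y \<in> Uset" "dist y \<xi> < \<delta>" for y
    proof (rule tendsto_lowerbound[OF tendsto_ext_shape[OF cvx y(1)] _ trivial_limit_at_left_real])
      have "((\<lambda>t. dist (t *\<^sub>R y) \<xi>) \<longlongrightarrow> dist (1 *\<^sub>R y) \<xi>) (at_left (1::real))"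
        by (intro tendsto_intros)
      then have "\<forall>\<^sub>F t in at_left 1. dist (t *\<^sub>R y) \<xi> < \<delta>"
        using y by (intro order_tendstoD(2)) auto
      then show "\<forall>\<^sub>F t in at_left 1. ereal c1 \<le> ereal (g (t *\<^sub>R y))"
        using eventually_at_left_real[of 0 1, simplified]
        by eventually_elim (auto intro!: \<delta>(2) scaleR_in_intU[OF y(1)])
    qed
    then show ?thesis
      unfolding eventually_at using \<delta>(1) c1(1) by (blast intro: less_le_trans)
  qed
qed

section \<open>Lattice paths\<close>

lemma endpt_append: "endpt x (ss @ ts) = endpt (endpt x ss) ts"
  by (induction ss arbitrary: x) auto

lemma pathw_ge:
  assumes "\<And>s x. s \<in> set ss \<Longrightarrow> m \<le> stepw t x s"
  shows "real (length ss) * m \<le> pathw t x ss"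
  using assms
proof (induction ss arbitrary: x)
  case Nil
  then show ?case by simp
next
  case (Cons s ss)
  then have "m \<le> stepw t x s" "real (length ss) * m \<le> pathw t (x + stepv s) ss"
    by auto
  then show ?case
    by (simp add: algebra_simps)
qed

lemma stepw_ge_stepR: "(\<And>e. r \<le> t e) \<Longrightarrow> s \<in> stepR \<Longrightarrow> r \<le> stepw t x s"
  by (auto simp: stepR_def)

lemma stepw_ge_stepRo: "(\<And>e. r \<le> t e) \<Longrightarrow> min r 0 \<le> stepw t x s"
  by (cases s) (auto simp: min_le_iff_disj)

lemma finite_paths: "finite (paths S n x)"
proof (rule finite_subset)
  show "paths S n x \<subseteq> {ss. set ss \<subseteq> UNIV \<and> length ss = n}"
    by (auto simp: paths_def)
qed (rule finite_lists_length_eq, simp)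

lemma Gpt_ge:
  assumes "x \<in> reach S n" "\<And>ss. ss \<in> paths S n x \<Longrightarrow> b \<le> pathw t 0 ss"
  shows "b \<le> Gpt S t n x"
  using assms finite_paths[of S n x] by (simp add: Gpt_def reach_def)

lemma reach_mono: "S \<subseteq> S' \<Longrightarrow> reach S n \<subseteq> reach S' n"
  by (auto simp: reach_def paths_def)

lemma zero_in_reach: "0 \<in> reach S 0"
  by (auto simp: reach_def paths_def)

lemma reach_Suc: "x \<in> reach S n \<Longrightarrow> s \<in> S \<Longrightarrow> x + stepv s \<in> reach S (Suc n)"
proof -
  assume "x \<in> reach S n" "s \<in> S"
  then obtain ss where "ss \<in> paths S n x"
    by (auto simp: reach_def)
  then have "ss @ [s] \<in> paths S (Suc n) (x + stepv s)"
    using \<open>s \<in> S\<close> by (auto simp: paths_def endpt_append)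
  then show ?thesis
    by (auto simp: reach_def)
qed

lemma reach_stepR_add_even:
  fixes x :: "int ^ 'n::finite"
  shows "x \<in> reach stepR n \<Longrightarrow> x \<in> reach stepR (n + 2 * j)"
proof (induction j)
  case (Suc j)
  fix i :: 'n
  have "x + stepv (Some (i, True)) + stepv (Some (i, False)) \<in> reach stepR (Suc (Suc (n + 2 * j)))"
    using Suc by (intro reach_Suc) (auto simp: stepR_def)
  then show ?case
    by simp
qed simp

definition int_l1norm :: "int ^ 'n::finite \<Rightarrow> int" where
  "int_l1norm x = (\<Sum>i\<in>UNIV. \<bar>x $ i\<bar>)"

lemma reach_stepR_int_l1norm: "int_l1norm x = int m \<Longrightarrow> x \<in> reach stepR m"
proof (induction m arbitrary: x)
  case 0
  then have "x = 0"
    by (simp add: int_l1norm_def vec_eq_iff sum_nonneg_eq_0_iff)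
  then show ?case
    using zero_in_reach by simp
next
  case (Suc m)
  then have "x \<noteq> 0"
    by (auto simp: int_l1norm_def)
  then obtain i where i: "x $ i \<noteq> 0"
    by (auto simp: vec_eq_iff)
  define s where "s = Some (i, x $ i > 0)"
  have "\<bar>(x - stepv s) $ j\<bar> = \<bar>x $ j\<bar> - (if j = i then 1 else 0)" for j
    using i by (auto simp: s_def unitv_def)
  then have "int_l1norm (x - stepv s) = int m"
    using Suc.prems by (simp add: int_l1norm_def sum_subtractf)
  then have "x - stepv s + stepv s \<in> reach stepR (Suc m)"
    by (intro reach_Suc Suc.IH) (auto simp: stepR_def s_def)
  then show ?case
    by simp
qed

(* Doubling fixes the parity: a path with n unit steps ends at a point of l1 norm \<equiv> n mod 2. *)
lemma double_in_reach_stepR: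
  assumes "int_l1norm x \<le> int n"
  shows "2 * x \<in> reach stepR (2 * n)"
proof -
  obtain m where m: "int_l1norm x = int m" "m \<le> n"
    using assms by (metis int_l1norm_def nonneg_int_cases of_nat_le_iff sum_nonneg abs_ge_zero)
  have "int_l1norm (2 * x) = int (2 * m)"
    using m(1) by (simp add: int_l1norm_def abs_mult sum_distrib_left[symmetric])
  then have "2 * x \<in> reach stepR (2 * m + 2 * (n - m))"
    by (intro reach_stepR_add_even reach_stepR_int_l1norm)
  moreover have "2 * m + 2 * (n - m) = 2 * n"
    using m(2) by simp
  ultimately show ?thesis
    by simp
qed

definition round_toward_zero :: "real \<Rightarrow> int" where
  "round_toward_zero r = (if 0 \<le> r then \<lfloor>r\<rfloor> else \<lceil>r\<rceil>)"

lemma abs_round_toward_zero_le: "\<bar>real_of_int (round_toward_zero r)\<bar> \<le> \<bar>r\<bar>"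
  unfolding round_toward_zero_def by auto

lemma abs_round_toward_zero_diff_le: "\<bar>real_of_int (round_toward_zero r) - r\<bar> \<le> 1"
  using real_of_int_floor_add_one_gt[of r] of_int_floor_le[of r] ceiling_correct[of r]
  unfolding round_toward_zero_def abs_le_iff by (cases "0 \<le> r") (simp_all, linarith+)

lemma LIMSEQ_divide_of_bounded_error:
  assumes "\<And>n. \<bar>f n - real n * a\<bar> \<le> C"
  shows "(\<lambda>n. f n / real n) \<longlonglongrightarrow> a"
proof -
  have "(\<lambda>n. (f n - real n * a) / real n) \<longlonglongrightarrow> 0"
    using assms by (intro Lim_null_comparison[OF _ lim_const_over_n[of C]] always_eventually)
      (simp add: divide_right_mono)
  then have "(\<lambda>n. a + (f n - real n * a) / real n) \<longlonglongrightarrow> a + 0"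
    by (intro tendsto_add tendsto_const)
  moreover have "\<forall>\<^sub>F n in sequentially. a + (f n - real n * a) / real n = f n / real n"
    using eventually_gt_at_top[of 0] by eventually_elim (simp add: field_simps)
  ultimately show ?thesis
    using Lim_transform_eventually by fastforce
qed

lemma even_lattice_approximation:
  fixes \<xi> :: "real ^ 'n::finite"
  assumes "l1norm \<xi> \<le> 1"
  obtains x where "\<And>n. x n \<in> reach stepR (2 * n)"
    and "(\<lambda>n. (1 / real n) *\<^sub>R toR (x n)) \<longlonglongrightarrow> 2 *\<^sub>R \<xi>"
proof
  define y where "y n = (\<chi> i. round_toward_zero (real n * \<xi> $ i))" for n
  show "2 * y n \<in> reach stepR (2 * n)" for n
  proof (rule double_in_reach_stepR)
    have "real_of_int (int_l1norm (y n)) \<le> (\<Sum>i\<in>UNIV. \<bar>real n * \<xi> $ i\<bar>)"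
      by (simp add: int_l1norm_def y_def sum_mono abs_round_toward_zero_le)
    also have "\<dots> = real n * l1norm \<xi>"
      by (simp add: l1norm_def abs_mult sum_distrib_left)
    also have "\<dots> \<le> real n"
      using assms by (simp add: mult_left_le)
    finally show "int_l1norm (y n) \<le> int n"
      by linarith
  qed
  show "(\<lambda>n. (1 / real n) *\<^sub>R toR (2 * y n)) \<longlonglongrightarrow> 2 *\<^sub>R \<xi>"
  proof (rule vec_tendstoI)
    fix i
    have "(\<lambda>n. 2 * (real_of_int (round_toward_zero (real n * \<xi> $ i)) / real n)) \<longlonglongrightarrow> 2 * \<xi> $ i"
      by (intro tendsto_mult tendsto_const LIMSEQ_divide_of_bounded_error)
        (rule abs_round_toward_zero_diff_le)
    then show "(\<lambda>n. ((1 / real n) *\<^sub>R toR (2 * y n)) $ i) \<longlonglongrightarrow> (2 *\<^sub>R \<xi>) $ i"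
      by (simp add: toR_def y_def)
  qed
qed

section \<open>Lower bounds for the shape functions\<close>

definition shape_limit :: "'n::finite step set \<Rightarrow> ('n edge \<Rightarrow> real) \<Rightarrow> (real ^ 'n \<Rightarrow> real) \<Rightarrow> bool" where
  "shape_limit S t g \<longleftrightarrow> (\<forall>\<xi> \<alpha> (k::nat \<Rightarrow> nat) (x::nat \<Rightarrow> int ^ 'n).
        \<alpha> > l1norm \<xi> \<and> filterlim k at_top sequentially
        \<and> (\<lambda>n. real (k n) / real n) \<longlonglongrightarrow> \<alpha>
        \<and> (\<forall>n. x n \<in> reach S (k n))
        \<and> (\<lambda>n. (1 / real n) *\<^sub>R toR (x n)) \<longlonglongrightarrow> \<xi>
        \<longrightarrow> (\<lambda>n. Gpt S t (k n) (x n) / real n) \<longlonglongrightarrow> \<alpha> * g ((1 / \<alpha>) *\<^sub>R \<xi>))"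

lemma is_shape_fn_iff_AE: "is_shape_fn M T S g \<longleftrightarrow> (AE \<omega> in M. shape_limit S (\<lambda>e. T e \<omega>) g)"
  unfolding is_shape_fn_def shape_limit_def ..

lemma shape_limit_ge:
  assumes shape: "shape_limit S t g" and S: "stepR \<subseteq> S"
    and path_ge: "\<And>ss. set ss \<subseteq> S \<Longrightarrow> real (length ss) * m \<le> pathw t 0 ss"
    and \<xi>: "\<xi> \<in> intU"
  shows "m \<le> g \<xi>"
proof -
  obtain x where x: "\<And>n. x n \<in> reach stepR (2 * n)"
    and x_lim: "(\<lambda>n. (1 / real n) *\<^sub>R toR (x n)) \<longlonglongrightarrow> 2 *\<^sub>R \<xi>"
    using even_lattice_approximation[of \<xi>] \<xi> by (auto simp: intU_def)
  have reach: "x n \<in> reach S (2 * n)" for n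
    using x reach_mono[OF S] by blast
  have "filterlim (\<lambda>n::nat. 2 * n) at_top sequentially"
    by (intro filterlim_subseq) (simp add: strict_mono_def)
  moreover have "(\<lambda>n. real (2 * n) / real n) \<longlonglongrightarrow> 2"
    using LIMSEQ_divide_of_bounded_error[of "\<lambda>n. real (2 * n)" 2 0] by simp
  moreover have "l1norm (2 *\<^sub>R \<xi>) < 2"
    using \<xi> by (simp add: l1norm_scaleR intU_def)
  ultimately have "(\<lambda>n. Gpt S t (2 * n) (x n) / real n) \<longlonglongrightarrow> 2 * g ((1 / 2) *\<^sub>R 2 *\<^sub>R \<xi>)"
    using shape reach x_lim unfolding shape_limit_def by blast
  then have lim: "(\<lambda>n. Gpt S t (2 * n) (x n) / real n) \<longlonglongrightarrow> 2 * g \<xi>"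
    by simp
  have Gpt_lb: "real (2 * n) * m \<le> Gpt S t (2 * n) (x n)" for n
  proof (rule Gpt_ge[OF reach])
    fix ss assume "ss \<in> paths S (2 * n) (x n)"
    then show "real (2 * n) * m \<le> pathw t 0 ss"
      using path_ge[of ss] by (simp add: paths_def)
  qed
  have "\<forall>\<^sub>F n in sequentially. 2 * m \<le> Gpt S t (2 * n) (x n) / real n"
    using eventually_gt_at_top[of 0]
    by eventually_elim (use Gpt_lb in \<open>simp add: pos_le_divide_eq mult_ac\<close>)
  then have "2 * m \<le> 2 * g \<xi>"
    by (rule tendsto_lowerbound[OF lim]) simp
  then show ?thesis
    by simp
qed

lemma AE_ess_inf_le:
  fixes T :: "'i::countable \<Rightarrow> 'a \<Rightarrow> real"
  assumes meas: "\<And>i. T i \<in> borel_measurable M"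
    and ident: "\<And>i j. distr M borel (T i) = distr M borel (T j)"
  shows "AE \<omega> in M. \<forall>i. - esssup M (\<lambda>\<omega>. - ereal (T j \<omega>)) \<le> ereal (T i \<omega>)"
proof -
  define r where "r = - esssup M (\<lambda>\<omega>. - ereal (T j \<omega>))"
  have borel: "{y \<in> space borel. r \<le> ereal y} \<in> sets borel"
    by measurable
  have "AE \<omega> in M. r \<le> ereal (T j \<omega>)"
    using esssup_AE[of "\<lambda>\<omega>. - ereal (T j \<omega>)" M]
    by eventually_elim (simp add: r_def ereal_uminus_le_reorder)
  then have "AE y in distr M borel (T i). r \<le> ereal y" for i
    unfolding ident[of i j] by (simp add: AE_distr_iff[OF meas borel])
  then have "AE \<omega> in M. r \<le> ereal (T i \<omega>)" for i
    by (simp add: AE_distr_iff[OF meas borel])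
  then show ?thesis
    unfolding r_def by (simp add: AE_all_countable)
qed

lemma shape_fns_ge_ess_inf:
  fixes T :: "'n::finite edge \<Rightarrow> 'a \<Rightarrow> real"
  assumes P: "prob_space M" and meas: "\<And>e. T e \<in> borel_measurable M"
    and ident: "\<And>e e'. distr M borel (T e) = distr M borel (T e')"
    and r0_fin: "- esssup M (\<lambda>\<omega>. - ereal (T e0 \<omega>)) \<noteq> -\<infinity>"
    and g_shape: "is_shape_fn M T stepR g" and go_shape: "is_shape_fn M T stepRo go"
  obtains r where "- esssup M (\<lambda>\<omega>. - ereal (T e0 \<omega>)) = ereal r"
    and "\<And>\<xi>. \<xi> \<in> intU \<Longrightarrow> r \<le> g \<xi>" and "\<And>\<xi>. \<xi> \<in> intU \<Longrightarrow> min r 0 \<le> go \<xi>"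
proof -
  define r0 where "r0 = - esssup M (\<lambda>\<omega>. - ereal (T e0 \<omega>))"
  have "AE \<omega> in M. (\<forall>e. r0 \<le> ereal (T e \<omega>))
      \<and> shape_limit stepR (\<lambda>e. T e \<omega>) g \<and> shape_limit stepRo (\<lambda>e. T e \<omega>) go"
    using AE_ess_inf_le[of T M e0] meas ident g_shape go_shape
    unfolding is_shape_fn_iff_AE r0_def by (auto simp: eventually_conj_iff)
  then obtain \<omega> where \<omega>: "\<And>e. r0 \<le> ereal (T e \<omega>)"
    "shape_limit stepR (\<lambda>e. T e \<omega>) g" "shape_limit stepRo (\<lambda>e. T e \<omega>) go"
    using eventually_happens'[OF prob_space.ae_filter_bot[OF P]] by blast
  then obtain r where r: "r0 = ereal r"
    using r0_fin unfolding r0_def[symmetric] by (cases r0) (auto dest: spec[of _ e0])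
  have T_ge: "r \<le> T e \<omega>" for e
    using \<omega>(1)[of e] r by simp
  show thesis
  proof
    show "- esssup M (\<lambda>\<omega>. - ereal (T e0 \<omega>)) = ereal r"
      using r by (simp add: r0_def)
  next
    fix \<xi> :: "real ^ 'n" assume "\<xi> \<in> intU"
    then show "r \<le> g \<xi>"
      by (auto intro!: shape_limit_ge[OF \<omega>(2) order_refl] pathw_ge stepw_ge_stepR T_ge)
    show "min r 0 \<le> go \<xi>"
      using \<open>\<xi> \<in> intU\<close>
      by (auto intro!: shape_limit_ge[OF \<omega>(3)] pathw_ge stepw_ge_stepRo T_ge simp: stepRo_def)
  qed
qed

theorem theorem2p10:
  fixes M :: "'a measure" and T :: "'n::finite edge \<Rightarrow> 'a \<Rightarrow> real"
    and g go :: "real ^ 'n \<Rightarrow> real" and e0 :: "'n edge"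
  assumes d2: "CARD('n) \<ge> 2"
    and P: "prob_space M"
    and indep: "prob_space.indep_vars M (\<lambda>_. borel) T UNIV"
    and ident: "\<And>e e'. distr M borel (T e) = distr M borel (T e')"
    and r0_fin: "- esssup M (\<lambda>\<omega>. - ereal (T e0 \<omega>)) \<noteq> -\<infinity>"
    and moment: "(\<integral>\<^sup>+ \<omega>. ennreal ((Min ((\<lambda>e. max 0 (T e \<omega>)) ` edges0)) ^ CARD('n)) \<partial>M) < \<infinity>"
    and g_shape: "is_shape_fn M T stepR g"
    and g_cvx: "convex_on intU g" and g_cont: "continuous_on intU g"
    and go_shape: "is_shape_fn M T stepRo go"
    and go_cvx: "convex_on intU go" and go_cont: "continuous_on intU go"
  shows "(\<forall>\<xi>. l1norm \<xi> = 1 \<longrightarrow>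
            (\<exists>L. ((\<lambda>t. ereal (g (t *\<^sub>R \<xi>))) \<longlongrightarrow> L) (at_left 1))
          \<and> (\<exists>L. ((\<lambda>t. ereal (go (t *\<^sub>R \<xi>))) \<longlongrightarrow> L) (at_left 1)))
       \<and> (\<forall>\<xi>\<in>Uset. - esssup M (\<lambda>\<omega>. - ereal (T e0 \<omega>)) \<le> ext_shape g \<xi>)
       \<and> (\<forall>\<xi>\<in>Uset. min (- esssup M (\<lambda>\<omega>. - ereal (T e0 \<omega>))) 0 \<le> ext_shape go \<xi>)
       \<and> convex_ereal_on Uset (ext_shape g) \<and> lsc_on Uset (ext_shape g)
       \<and> convex_ereal_on Uset (ext_shape go) \<and> lsc_on Uset (ext_shape go)"
proof -
  (* Independence is only used for measurability: it matters, together with d \<ge> 2 and the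
     moment bound, for the existence of the shape functions, which is assumed here.  Continuity
     is automatic for convex functions on an open set. *)
  have "T e \<in> borel_measurable M" for e
    using indep by (cases e) (simp add: prob_space.indep_vars_def2[OF P])
  then obtain r where r: "- esssup M (\<lambda>\<omega>. - ereal (T e0 \<omega>)) = ereal r"
    and g_ge: "\<And>\<xi>. \<xi> \<in> intU \<Longrightarrow> r \<le> g \<xi>" and go_ge: "\<And>\<xi>. \<xi> \<in> intU \<Longrightarrow> min r 0 \<le> go \<xi>"
    using shape_fns_ge_ess_inf[OF P _ ident r0_fin g_shape go_shape] by blast
  have radial: "\<exists>L. ((\<lambda>t. ereal (f (t *\<^sub>R \<xi>))) \<longlongrightarrow> L) (at_left 1)"
    if "convex_on intU f" "l1norm \<xi> = 1" for f and \<xi> :: "real ^ 'n"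
    using tendsto_ext_shape[OF that(1), of \<xi>] that(2) by (auto simp: Uset_def)
  have "min (ereal r) 0 = ereal (min r 0)"
    by (simp add: min_def)
  then show ?thesis
    unfolding r
    using radial ext_shape_ge[OF g_cvx _ g_ge] ext_shape_ge[OF go_cvx _ go_ge] g_cvx go_cvx
    by (simp add: convex_ereal_on_ext_shape lsc_on_ext_shape)
qed

end
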